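(* For every integer $m\ge 0$ and every real $a>-1$, $$\int_0^\infty\frac{dx}{(x^4+2ax^2+1)^{m+1}}=\frac{\pi}{2}\,\frac{P_m(a)}{[2(a+1)]^{m+1/2}},$$ where $$P_m(a)=\frac{(1/2)_m}{((2m)!)^2}\sum_{i=0}^m\frac{(2m-2i)!\,(2m+2i)!}{(m+1/2)_i\,(m-i)!}\binom{m}{i}\left(\frac{a+1}{2}\right)^{i}.$$ Equivalently, $P_m(a)=\sum_{j=0}^m d_{j,m}a^j$ with $$d_{j,m}=\frac{(1/2)_m}{((2m)!)^2}\sum_{i=j}^m\frac{(2m-2i)!\,(2m+2i)!}{(m+1/2)_i\,(m-i)!\,2^{i}}\binom{m}{i}\binom{i}{j}.$$
   Context: $(c)_k$ denotes the Pochhammer symbol (rising factorial): $(c)_0=1$, $(c)_k=c(c+1)\cdots(c+k-1)$ for $k\ge 1$. *)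

theory Defs
  imports "HOL-Analysis.Analysis"
begin

definition P :: "nat \<Rightarrow> real \<Rightarrow> real" where
  "P m a = pochhammer (1/2) m / (fact (2*m))^2 *
     (\<Sum>i=0..m. fact (2*m - 2*i) * fact (2*m + 2*i) /
        (pochhammer (real m + 1/2) i * fact (m - i)) * real (m choose i) * ((a + 1)/2)^i)"

definition d :: "nat \<Rightarrow> nat \<Rightarrow> real" where
  "d j m = pochhammer (1/2) m / (fact (2*m))^2 *
     (\<Sum>i=j..m. fact (2*m - 2*i) * fact (2*m + 2*i) /
        (pochhammer (real m + 1/2) i * fact (m - i) * 2^i) * real (m choose i) * real (i choose j))"

end

theory Submission
  imports Defs "HOL-Real_Asymp.Real_Asymp"
begin

(*
  Let I_m(a) denote the integral of (x^4 + 2 a x^2 + 1)^-(m+1) over [0, oo), for a > -1.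

  Writing t = (a+1)/2, P_m(a) is a polynomial in t whose coefficients
  beta m i = (1/2)_(m-i)/(m-i)! * binom(m+i, i) obey a three-term recurrence.  It yields a
  differential recurrence for P and hence for G_m(a) = (pi/2) P_m(a) / (2(a+1))^(m+1/2):
      4(m+1) G_(m+1) = (4m+3) G_m + 2a G_m'.
  Expanding (a+1)^i binomially gives the coefficients d j m.

  The substitution x = t/(1-t) turns I_m(a) into the proper integral
  N_m(a) of (1-t)^(4m+2)/R_a(t)^(m+1) over [0,1], where R_a(t) = t^4 + 2a t^2 (1-t)^2 + (1-t)^4
  is positive.  Differentiating in a under the integral sign and integrating by parts shows
  that N_m obeys the same recurrence; for m = 0 an arccos antiderivative gives
  N_0(a) = pi / (2 sqrt(2(a+1))) = G_0(a).  Induction on m (comparing derivatives, since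
  N_m = G_m on the open set a > -1) gives N_m = G_m, and the theorem follows.
*)

(* Normalised coefficients: P m a = sum of beta m i * ((a+1)/2)^i (see P_eq_beta_poly). *)
definition beta :: "nat \<Rightarrow> nat \<Rightarrow> real" where
  "beta m i = (if i \<le> m then pochhammer (1/2) (m - i) / fact (m - i) * (fact (m + i) / (fact m * fact i))
               else 0)"

(* The coefficient in the definition of P, rewritten via (1/2)_(m+i) = (1/2)_m (m+1/2)_i
   and (2k)! = 4^k (1/2)_k k!. *)
lemma P_coeff_eq_beta:
  "pochhammer (1/2) m / (fact (2*m))^2 * (fact (2*m - 2*i) * fact (2*m + 2*i) /
     (pochhammer (real m + 1/2) i * fact (m - i)) * real (m choose i)) = beta m i"
proof (cases "i \<le> m")
  case False
  then show ?thesis by (simp add: beta_def)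
next
  case True
  define n where "n = m - i"
  have m: "m = n + i" using True by (simp add: n_def)
  have split: "pochhammer (1/2::real) (m + i) = pochhammer (1/2) m * pochhammer (real m + 1/2) i"
    using pochhammer_product'[of "1/2::real" m i] by (simp add: add.commute)
  have fact_double4: "fact (2*k) = (4^k * pochhammer (1/2) k * fact k :: real)" for k
    using fact_double[of k] by (simp add: power_mult)
  have facts: "fact (2*m - 2*i) = (4^n * pochhammer (1/2) n * fact n :: real)"
              "fact (2*m + 2*i) = (4^(m+i) * pochhammer (1/2) (m+i) * fact (m+i) :: real)"
              "fact (2*m) = (4^m * pochhammer (1/2) m * fact m :: real)"
    using fact_double4[of n] fact_double4[of "m+i"] fact_double4[of m]
    by (simp_all add: n_def diff_mult_distrib2 algebra_simps)
  have choose: "real (m choose i) = fact m / (fact i * fact n)"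
    using binomial_fact[OF True] by (simp add: n_def)
  have nz: "pochhammer (1/2::real) k \<noteq> 0" for k
    by (simp add: pochhammer_eq_0_iff)
  have nz': "pochhammer (real m + 1/2) i \<noteq> 0"
    using nz[of "m+i"] split by auto
  show ?thesis
    unfolding beta_def facts choose split using True nz nz'
    by (simp add: n_def[symmetric] field_simps power2_eq_square) (simp add: m power_add)
qed

(* The two ingredients of the coefficient recurrence, each comparing a coefficient of
   degree m with one of degree m+1 (stated without division). *)
lemma beta_same_index:
  assumes "i \<le> Suc m"
  shows "real (Suc m + i) * ((real m + 1/2 - real i) * beta m i)
       = real (Suc m - i) * real (Suc m) * beta (Suc m) i"
proof (cases "i = Suc m")
  case True
  then show ?thesis by (simp add: beta_def)
next
  case False
  then have i: "i \<le> m" using assms by simp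
  define n where "n = m - i"
  define c where "c = pochhammer (1/2::real) n / fact n"
  define b where "b = fact (m + i) / (fact m * fact i :: real)"
  have old: "beta m i = c * b"
    using i by (simp add: beta_def c_def b_def n_def)
  have new: "(real n + 1) * (real m + 1) * beta (Suc m) i = c * (real n + 1/2) * (b * (real (m + i) + 1))"
  proof -
    have "Suc m - i = Suc n" using i by (simp add: n_def)
    moreover have "fact (Suc n) = (real n + 1) * fact n" "fact (Suc m) = (real m + 1) * fact m"
         "fact (Suc (m + i)) = (real (m + i) + 1) * fact (m + i)"
         "pochhammer (1/2) (Suc n) = pochhammer (1/2) n * (real n + 1/2)"
      by (simp_all add: pochhammer_Suc algebra_simps)
    ultimately show ?thesis
      using i by (simp del: fact_Suc add: beta_def c_def b_def n_def[symmetric])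
  qed
  have e: "real (Suc m - i) = real n + 1" "real m + 1/2 - real i = real n + 1/2"
          "real (Suc m + i) = real (m + i) + 1"
    using i by (simp_all add: n_def of_nat_diff)
  have "real (Suc m + i) * ((real m + 1/2 - real i) * beta m i)
      = c * (real n + 1/2) * (b * (real (m + i) + 1))"
    unfolding e old by (simp add: algebra_simps)
  also have "\<dots> = real (Suc m - i) * real (Suc m) * beta (Suc m) i"
    unfolding new[symmetric] e by simp
  finally show ?thesis .
qed

lemma beta_shifted_index:
  assumes "j \<le> m"
  shows "real (Suc m + Suc j) * (2 * real (m + Suc j) * beta m j)
       = 2 * real (Suc j) * real (Suc m) * beta (Suc m) (Suc j)"
proof -
  define c where "c = pochhammer (1/2::real) (m - j) / fact (m - j)"
  define b where "b = fact (m + j) / (fact m * fact j :: real)"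
  have old: "beta m j = c * b"
    using assms by (simp add: beta_def c_def b_def)
  have new: "(real m + 1) * (real j + 1) * beta (Suc m) (Suc j)
      = c * (b * (real (m + j) + 2) * (real (m + j) + 1))"
  proof -
    have "fact (Suc (Suc (m + j))) = (real (m + j) + 2) * (real (m + j) + 1) * fact (m + j)"
         "fact (Suc m) = (real m + 1) * fact m" "fact (Suc j) = (real j + 1) * fact j"
      by (simp_all add: algebra_simps)
    then show ?thesis
      using assms by (simp del: fact_Suc add: beta_def c_def b_def)
  qed
  show ?thesis
    unfolding old using new by (simp add: algebra_simps)
qed

lemma beta_recurrence:
  "real (Suc m) * beta (Suc m) i
   = (if i = 0 then 0 else 2 * real (m + i) * beta m (i - 1)) + (real m + 1/2 - real i) * beta m i"
proof (cases "i \<le> Suc m")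
  case False
  then show ?thesis by (simp add: beta_def)
next
  case True
  have same: "real (Suc m + i) * ((real m + 1/2 - real i) * beta m i)
       = real (Suc m - i) * real (Suc m) * beta (Suc m) i"
    using beta_same_index[OF True] .
  have shifted: "real (Suc m + i) * (if i = 0 then 0 else 2 * real (m + i) * beta m (i - 1))
       = 2 * real i * real (Suc m) * beta (Suc m) i"
  proof (cases i)
    case (Suc j)
    then show ?thesis using beta_shifted_index[of j m] True by simp
  qed simp
  have "real (Suc m - i) + 2 * real i = real (Suc m + i)"
    using True by (simp add: of_nat_diff)
  then have "real (Suc m + i) * (real (Suc m) * beta (Suc m) i)
      = real (Suc m + i) * ((if i = 0 then 0 else 2 * real (m + i) * beta m (i - 1))
                           + (real m + 1/2 - real i) * beta m i)"
    unfolding distrib_left same shifted by (simp add: algebra_simps)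
  then show ?thesis by simp
qed

definition beta_poly :: "nat \<Rightarrow> real \<Rightarrow> real" where
  "beta_poly m t = (\<Sum>i=0..m. beta m i * t^i)"

definition beta_poly' :: "nat \<Rightarrow> real \<Rightarrow> real" where
  "beta_poly' m t = (\<Sum>i=0..m. beta m i * real i * t^(i - 1))"

lemma beta_poly_deriv: "(beta_poly m has_real_derivative beta_poly' m t) (at t)"
  unfolding beta_poly_def[abs_def] beta_poly'_def
  by (auto intro!: derivative_eq_intros DERIV_sum simp: mult.assoc)

(* The coefficient recurrence, summed against t^i: a first-order differential recurrence. *)
lemma beta_poly_recurrence:
  "real (Suc m) * beta_poly (Suc m) t
   = t * (4 * real m + 3) * beta_poly m t + t * (2*t - 1) * beta_poly' m t
     - (t - 1/2) * (2 * real m + 1) * beta_poly m t"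
proof -
  define up where "up i = 2 * real (m + Suc i) * beta m i * t^Suc i" for i
  define stay where "stay i = (real m + 1/2 - real i) * beta m i * t^i" for i
  have "real (Suc m) * beta_poly (Suc m) t
      = (\<Sum>i=0..Suc m. (if i = 0 then 0 else 2 * real (m + i) * beta m (i - 1)) * t^i)
        + (\<Sum>i=0..Suc m. stay i)"
    unfolding beta_poly_def sum_distrib_left stay_def sum.distrib[symmetric]
    by (rule sum.cong[OF refl], subst mult.assoc[symmetric], subst beta_recurrence)
       (simp add: algebra_simps)
  also have "\<dots> = (\<Sum>i=0..m. up i) + (\<Sum>i=0..m. stay i)"
  proof -
    have "(\<Sum>i=0..Suc m. (if i = 0 then 0 else 2 * real (m + i) * beta m (i - 1)) * t^i)
        = (\<Sum>i=0..m. up i)"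
      by (subst sum.atLeast0_atMost_Suc_shift) (simp add: up_def)
    moreover have "stay (Suc m) = 0" by (simp add: stay_def beta_def)
    ultimately show ?thesis by simp
  qed
  also have "\<dots> = t * (4 * real m + 3) * beta_poly m t + t * (2*t - 1) * beta_poly' m t
                  - (t - 1/2) * (2 * real m + 1) * beta_poly m t"
    unfolding beta_poly_def beta_poly'_def sum_distrib_left sum_subtractf[symmetric]
      sum.distrib[symmetric]
  proof (rule sum.cong[OF refl])
    fix i
    show "up i + stay i = t * (4 * real m + 3) * (beta m i * t^i)
          + t * (2*t - 1) * (beta m i * real i * t^(i - 1))
          - (t - 1/2) * (2 * real m + 1) * (beta m i * t^i)"
      by (cases i) (simp_all add: up_def stay_def algebra_simps)
  qed
  finally show ?thesis .
qed

lemma P_eq_beta_poly: "P m a = beta_poly m ((a + 1)/2)"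
  unfolding P_def beta_poly_def sum_distrib_left
  by (rule sum.cong[OF refl]) (simp add: P_coeff_eq_beta[symmetric] mult.assoc)

lemma d_eq_beta_sum: "d j m = (\<Sum>i=j..m. beta m i / 2^i * real (i choose j))"
  unfolding d_def sum_distrib_left
proof (rule sum.cong[OF refl])
  fix i
  have regroup: "c * (X / (Y * z) * u * v) = c * (X / Y * u) / z * v" for c X Y z u v :: real
    by (simp add: divide_inverse mult_ac)
  show "pochhammer (1/2) m / (fact (2*m))^2 * (fact (2*m - 2*i) * fact (2*m + 2*i) /
          (pochhammer (real m + 1/2) i * fact (m - i) * 2^i) * real (m choose i) * real (i choose j))
        = beta m i / 2^i * real (i choose j)"
    unfolding regroup P_coeff_eq_beta ..
qed

lemma P_polynomial: "P m a = (\<Sum>j=0..m. d j m * a^j)"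
proof -
  define c where "c i j = (if j \<le> i then beta m i / 2^i * real (i choose j) * a^j else 0)" for i j
  have "P m a = (\<Sum>i=0..m. beta m i / 2^i * (a + 1)^i)"
    unfolding P_eq_beta_poly beta_poly_def by (simp add: power_divide)
  also have "\<dots> = (\<Sum>i=0..m. \<Sum>j=0..m. c i j)"
  proof (rule sum.cong[OF refl])
    fix i assume i: "i \<in> {0..m}"
    have "(a + 1)^i = (\<Sum>j=0..i. real (i choose j) * a^j)"
      using binomial_ring[of a 1 i] by (simp add: atLeast0AtMost)
    also have "\<dots> = (\<Sum>j=0..m. if j \<le> i then real (i choose j) * a^j else 0)"
      using i by (intro sum.mono_neutral_cong_left) auto
    finally show "beta m i / 2^i * (a + 1)^i = (\<Sum>j=0..m. c i j)"
      by (simp add: c_def sum_distrib_left if_distrib mult.assoc cong: if_cong)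
  qed
  also have "\<dots> = (\<Sum>j=0..m. \<Sum>i=0..m. c i j)"
    by (rule sum.swap)
  also have "\<dots> = (\<Sum>j=0..m. d j m * a^j)"
  proof (rule sum.cong[OF refl])
    fix j assume j: "j \<in> {0..m}"
    have "(\<Sum>i=0..m. c i j) = (\<Sum>i=j..m. beta m i / 2^i * real (i choose j) * a^j)"
      using j by (intro sum.mono_neutral_cong_right) (auto simp: c_def)
    then show "(\<Sum>i=0..m. c i j) = d j m * a^j"
      by (simp add: d_eq_beta_sum sum_distrib_right)
  qed
  finally show ?thesis .
qed

definition closed_form :: "nat \<Rightarrow> real \<Rightarrow> real" where
  "closed_form m a = (pi/2) * beta_poly m ((a + 1)/2) / (2*(a + 1)) powr (real m + 1/2)"

definition closed_form' :: "nat \<Rightarrow> real \<Rightarrow> real" where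
  "closed_form' m a = (pi/2) * (beta_poly' m ((a + 1)/2) / 2
       - beta_poly m ((a + 1)/2) * (2 * real m + 1) / (2*(a + 1))) / (2*(a + 1)) powr (real m + 1/2)"

lemma closed_form_deriv:
  assumes "a > -1"
  shows "(closed_form m has_real_derivative closed_form' m a) (at a)"
proof -
  define e where "e = real m + 1/2"
  define w where "w = (2*(a + 1)) powr e"
  have pos: "2*(a + 1) > 0" using assms by simp
  then have w: "w > 0" "(2*(a + 1)) powr (e - 1) = w / (2*(a + 1))"
    by (simp_all add: w_def powr_diff)
  have "((\<lambda>a. (pi/2) * beta_poly m ((a + 1)/2) / (2*(a + 1)) powr e) has_real_derivative
     ((pi/2) * (beta_poly' m ((a + 1)/2) * (1/2)) * w
       - (pi/2) * beta_poly m ((a + 1)/2) * (e * (w / (2*(a + 1))) * 2)) / (w * w)) (at a)"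
    using pos unfolding w(2)[symmetric] w_def
    by (intro DERIV_divide DERIV_cmult DERIV_chain2[OF beta_poly_deriv])
       (auto intro!: derivative_eq_intros simp: powr_diff)
  moreover have "((pi/2) * (beta_poly' m ((a + 1)/2) * (1/2)) * w
       - (pi/2) * beta_poly m ((a + 1)/2) * (e * (w / (2*(a + 1))) * 2)) / (w * w) = closed_form' m a"
    using pos w unfolding closed_form'_def e_def[symmetric] w_def[symmetric]
    by (simp add: divide_simps) (simp add: e_def algebra_simps)
  ultimately show ?thesis
    unfolding closed_form_def[abs_def] e_def[symmetric] by simp
qed

lemma closed_form_recurrence:
  assumes "a > -1"
  shows "4 * real (Suc m) * closed_form (Suc m) a = (4 * real m + 3) * closed_form m a + 2 * a * closed_form' m a"
proof -
  define t where "t = (a + 1)/2"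
  define w where "w = (2*(a + 1)) powr (real m + 1/2)"
  have t: "t > 0" "a = 2*t - 1" "2*(a + 1) = 4*t"
    using assms by (simp_all add: t_def field_simps)
  have w: "w > 0" using assms by (simp add: w_def)
  have "(2*(a + 1)) powr (real (Suc m) + 1/2) = (2*(a + 1)) powr ((real m + 1/2) + 1)"
    by (simp add: algebra_simps)
  also have "\<dots> = w * (2*(a + 1))"
    unfolding w_def powr_add using assms by simp
  finally have w_Suc: "(2*(a + 1)) powr (real (Suc m) + 1/2) = w * (4*t)"
    by (simp add: t)
  have rec: "beta_poly (Suc m) t = (t * (4 * real m + 3) * beta_poly m t + t * (2*t - 1) * beta_poly' m t
             - (t - 1/2) * (2 * real m + 1) * beta_poly m t) / real (Suc m)"
    using beta_poly_recurrence[of m t] by (simp add: field_simps)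
  show ?thesis
    unfolding closed_form_def closed_form'_def w_Suc w_def[symmetric]
    unfolding t_def[symmetric] rec t(3)
    using w t(1) unfolding t(2) by (simp add: divide_simps) (simp add: algebra_simps)
qed

(* After x = t/(1-t) the quartic becomes quart a t / (1-t)^4; quart' is its t-derivative. *)
definition quart :: "real \<Rightarrow> real \<Rightarrow> real" where
  "quart a t = t^4 + 2*a*t^2*(1 - t)^2 + (1 - t)^4"

definition quart' :: "real \<Rightarrow> real \<Rightarrow> real" where
  "quart' a t = 4*t^3 + 2*a*(2*t*(1 - t)^2 - 2*t^2*(1 - t)) - 4*(1 - t)^3"

(* The sum-of-squares form shows positivity for a > -1 and controls the arccos argument below. *)
lemma quart_sum_of_squares: "quart a t = (1 - 2*t)^2 + 2*(a + 1)*t^2*(1 - t)^2"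
  unfolding quart_def by (simp add: algebra_simps power2_eq_square power4_eq_xxxx)

lemma quart_pos:
  assumes "a > -1"
  shows "quart a t > 0"
proof (cases "t = 1/2")
  case True
  then have "2*(a + 1)*t^2*(1 - t)^2 > 0" using assms by simp
  moreover have "(1 - 2*t)^2 \<ge> 0" by simp
  ultimately show ?thesis unfolding quart_sum_of_squares by linarith
next
  case False
  then have "(1 - 2*t)^2 > 0" by simp
  moreover have "2*(a + 1)*t^2*(1 - t)^2 \<ge> 0" using assms by simp
  ultimately show ?thesis unfolding quart_sum_of_squares by linarith
qed

lemma quart_nonzero: "a > -1 \<Longrightarrow> quart a t \<noteq> 0"
  using quart_pos[of a t] by simp

lemma quart_continuous [continuous_intros]:
  "continuous_on S f \<Longrightarrow> continuous_on S g \<Longrightarrow> continuous_on S (\<lambda>x. quart (f x) (g x))"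
  unfolding quart_def by (intro continuous_intros)

lemma quart_deriv_t: "((\<lambda>t. quart a t) has_real_derivative quart' a t) (at t)"
  unfolding quart_def[abs_def] quart'_def by (auto intro!: derivative_eq_intros simp: algebra_simps)

lemma quart_deriv_a: "((\<lambda>a. quart a t) has_real_derivative 2*t^2*(1 - t)^2) (at a)"
  unfolding quart_def by (auto intro!: derivative_eq_intros)

lemma quart_symmetric: "quart a (1 - t) = quart a t"
  unfolding quart_def by (simp add: algebra_simps)

(* The integrand on [0,1] after substitution, and the kernel appearing in its a-derivative. *)
definition integrand :: "nat \<Rightarrow> real \<Rightarrow> real \<Rightarrow> real" where
  "integrand m a t = (1 - t)^(4*m + 2) / quart a t^(m + 1)"

definition integrand_a :: "nat \<Rightarrow> real \<Rightarrow> real \<Rightarrow> real" where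
  "integrand_a m a t = t^2 * (1 - t)^(4*m + 4) / quart a t^(m + 2)"

definition N :: "nat \<Rightarrow> real \<Rightarrow> real" where
  "N m a = integral {0..1} (integrand m a)"

lemma integrand_continuous: "a > -1 \<Longrightarrow> continuous_on S (integrand m a)"
  unfolding integrand_def by (intro continuous_intros) (auto simp: quart_nonzero)

lemma integrand_has_integral: "a > -1 \<Longrightarrow> (integrand m a has_integral N m a) {0..1}"
  unfolding N_def by (intro integrable_integral integrable_continuous_interval integrand_continuous)

lemma integrand_a_has_integral:
  "a > -1 \<Longrightarrow> (integrand_a m a has_integral integral {0..1} (integrand_a m a)) {0..1}"
  unfolding integrand_a_def
  by (intro integrable_integral integrable_continuous_interval continuous_intros) (auto simp: quart_nonzero)

lemma integrand_deriv_a: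
  assumes "a > -1"
  shows "((\<lambda>a. integrand m a t) has_real_derivative -2 * real (m + 1) * integrand_a m a t) (at a)"
proof -
  define q where "q = quart a t"
  define u where "u = (1 - t)^(4*m + 2)"
  have q: "q \<noteq> 0" using quart_nonzero[OF assms] by (simp add: q_def)
  have deriv: "((\<lambda>a. integrand m a t) has_real_derivative
      (0 * q^(m + 1) - u * (real (m + 1) * (2*t^2*(1 - t)^2 * q^(m + 1 - Suc 0)))) / (q^(m + 1) * q^(m + 1))) (at a)"
    unfolding integrand_def q_def u_def using q[unfolded q_def]
    by (intro DERIV_divide DERIV_const DERIV_power quart_deriv_a) auto
  have "(1 - t)^(4*m + 4) = u * (1 - t)^2"
    unfolding u_def by (metis add.assoc numeral_Bit0 power_add)
  then have "(0 * q^(m + 1) - u * (real (m + 1) * (2*t^2*(1 - t)^2 * q^(m + 1 - Suc 0)))) / (q^(m + 1) * q^(m + 1))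
      = -2 * real (m + 1) * integrand_a m a t"
    unfolding integrand_a_def q_def[symmetric] using q by (simp add: field_simps)
  with deriv show ?thesis by simp
qed

lemma N_deriv:
  assumes "a > -1"
  shows "(N m has_real_derivative -2 * real (m + 1) * integral {0..1} (integrand_a m a)) (at a)"
proof -
  have "((\<lambda>x. integral (cbox 0 1) (integrand m x)) has_field_derivative
          integral (cbox 0 1) (\<lambda>t. -2 * real (m + 1) * integrand_a m a t)) (at a within {-1<..})"
  proof (rule leibniz_rule_field_derivative)
    fix x t :: real assume "x \<in> {-1<..}"
    then show "((\<lambda>x. integrand m x t) has_field_derivative -2 * real (m + 1) * integrand_a m x t)
                 (at x within {-1<..})"
      using integrand_deriv_a[of x m t] by (simp add: has_field_derivative_at_within)
  next
    fix x :: real assume "x \<in> {-1<..}"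
    then show "integrand m x integrable_on cbox 0 1"
      by (intro integrable_continuous integrand_continuous) simp
  next
    have "\<forall>p\<in>{-1<..} \<times> cbox 0 1. quart (fst p) (snd p) \<noteq> 0" by (auto simp: quart_nonzero)
    then show "continuous_on ({-1<..} \<times> cbox 0 1) (\<lambda>(x, t). -2 * real (m + 1) * integrand_a m x t)"
      unfolding integrand_a_def split_beta by (intro continuous_intros) auto
  qed (use assms in auto)
  moreover have "at a within {-1<..} = at a"
    using assms by (intro at_within_open) auto
  ultimately show ?thesis
    unfolding N_def[abs_def] by simp
qed

(* The polynomial identity behind the integration by parts. *)
lemma quart_ibp_identity:
  "(1 - t) * quart a t - (4 * real m + 3) * t * quart a t - (real m + 1) * t * (1 - t) * quart' a t
   = quart a t - 4 * (real m + 1) * (quart a t - a * t^2 * (1 - t)^2 - (1 - t)^4)"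
  unfolding quart_def quart'_def
  by (simp add: algebra_simps power2_eq_square power3_eq_cube power4_eq_xxxx)

(* The potential t (1-t)^(4m+3) / quart^(m+1), vanishing at 0 and 1, differentiates to the
   combination of integrands that relates N (m+1) to N m and the kernel integral. *)
lemma ibp_potential_deriv:
  assumes "a > -1"
  shows "((\<lambda>t. t * (1 - t)^(4*m + 3) / quart a t^(m + 1)) has_real_derivative
           integrand m a t - 4 * real (m + 1) * (integrand m a t - a * integrand_a m a t - integrand (Suc m) a t))
         (at t)"
proof -
  define s where "s = 1 - t"
  define q where "q = quart a t"
  define q' where "q' = quart' a t"
  define u where "u = s^(4*m + 2)"
  define v where "v = q^m"
  have nz: "q \<noteq> 0" "v \<noteq> 0" using quart_nonzero[OF assms] by (simp_all add: q_def v_def)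
  have exps: "4*m + 3 = (4*m + 2) + 1" "4*m + 4 = (4*m + 2) + 2" "4 * Suc m + 2 = (4*m + 2) + 4"
             "m + 2 = m + 1 + 1" "Suc m + 1 = m + 1 + 1" by simp_all
  have pows: "s^(4*m + 3) = u * s" "s^(4*m + 3 - Suc 0) = u" "s^(4*m + 4) = u * s^2"
             "s^(4 * Suc m + 2) = u * s^4" "q^(m + 1) = q * v" "q^(m + 1 - Suc 0) = v"
             "q^(m + 2) = q * q * v" "q^(Suc m + 1) = q * q * v"
    unfolding exps power_add u_def v_def by (simp_all add: power2_eq_square)
  have "((\<lambda>t. t * (1 - t)^(4*m + 3) / quart a t^(m + 1)) has_real_derivative
      ((1 * s^(4*m + 3) + (real (4*m + 3) * ((0 - 1) * s^(4*m + 3 - Suc 0))) * t) * q^(m + 1)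
        - t * s^(4*m + 3) * (real (m + 1) * (q' * q^(m + 1 - Suc 0)))) / (q^(m + 1) * q^(m + 1))) (at t)"
    unfolding s_def q_def q'_def using nz(1)[unfolded q_def]
    by (intro DERIV_divide DERIV_mult DERIV_power DERIV_diff DERIV_const DERIV_ident quart_deriv_t) simp
  also have "((1 * s^(4*m + 3) + (real (4*m + 3) * ((0 - 1) * s^(4*m + 3 - Suc 0))) * t) * q^(m + 1)
        - t * s^(4*m + 3) * (real (m + 1) * (q' * q^(m + 1 - Suc 0)))) / (q^(m + 1) * q^(m + 1))
      = u * (s * q - (4 * real m + 3) * t * q - (real m + 1) * t * s * q') / (q * q * v)"
    unfolding pows using nz by (simp add: field_simps)
  also have "\<dots> = u * (q - 4 * (real m + 1) * (q - a * t^2 * s^2 - s^4)) / (q * q * v)"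
    using quart_ibp_identity[of t a m] by (simp add: s_def q_def q'_def)
  also have "\<dots> = integrand m a t - 4 * real (m + 1) * (integrand m a t - a * integrand_a m a t - integrand (Suc m) a t)"
    unfolding integrand_def integrand_a_def s_def[symmetric] q_def[symmetric] pows u_def[symmetric]
    using nz by (simp add: field_simps)
  finally show ?thesis .
qed

lemma N_integration_by_parts:
  assumes "a > -1"
  shows "4 * real (Suc m) * N (Suc m) a
         = (4 * real m + 3) * N m a - 4 * real (Suc m) * a * integral {0..1} (integrand_a m a)"
proof -
  define \<Phi> where "\<Phi> t = t * (1 - t)^(4*m + 3) / quart a t^(m + 1)" for t
  define g where "g t = integrand m a t - 4 * real (m + 1) * (integrand m a t - a * integrand_a m a t
                         - integrand (Suc m) a t)" for t
  have "(g has_integral (\<Phi> 1 - \<Phi> 0)) {0..1}"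
  proof (rule fundamental_theorem_of_calculus)
    fix t :: real
    show "(\<Phi> has_vector_derivative g t) (at t within {0..1})"
      unfolding \<Phi>_def[abs_def] g_def using ibp_potential_deriv[OF assms, of m t]
      by (simp add: has_real_derivative_iff_has_vector_derivative has_vector_derivative_at_within)
  qed simp
  then have zero: "(g has_integral 0) {0..1}"
    by (simp add: \<Phi>_def power_0_left)
  have "(g has_integral N m a - 4 * real (m + 1) * (N m a - a * integral {0..1} (integrand_a m a)
                                                  - N (Suc m) a)) {0..1}"
    unfolding g_def[abs_def]
    by (intro has_integral_diff has_integral_mult_right integrand_has_integral integrand_a_has_integral assms)
  from has_integral_unique[OF this zero] show ?thesis
    by (simp add: algebra_simps)
qed

lemma N_recurrence:
  assumes "a > -1" and "(N m has_real_derivative D) (at a)"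
  shows "4 * real (Suc m) * N (Suc m) a = (4 * real m + 3) * N m a + 2 * a * D"
proof -
  have D: "D = -2 * real (m + 1) * integral {0..1} (integrand_a m a)"
    using DERIV_unique[OF assms(2) N_deriv[OF assms(1)]] .
  show ?thesis
    unfolding D using N_integration_by_parts[OF assms(1), of m] by (simp add: algebra_simps)
qed

(* Base case m = 0: an arccos antiderivative for (t^2 + (1-t)^2) / quart a t. *)
lemma quart_base_identity:
  "4 * quart a t + (1 - 2*t) * quart' a t = 4 * (a + 1) * t * (1 - t) * (t^2 + (1 - t)^2)"
  unfolding quart_def quart'_def
  by (simp add: algebra_simps power2_eq_square power3_eq_cube power4_eq_xxxx)

lemma arccos_argument_bounds:
  assumes "a > -1"
  shows "\<bar>1 - 2*t\<bar> \<le> sqrt (quart a t)"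
    and "0 < t \<Longrightarrow> t < 1 \<Longrightarrow> \<bar>1 - 2*t\<bar> < sqrt (quart a t)"
proof -
  have gap: "quart a t - (1 - 2*t)^2 = 2*(a + 1)*t^2*(1 - t)^2"
    unfolding quart_sum_of_squares by simp
  have "2*(a + 1)*t^2*(1 - t)^2 \<ge> 0"
    using assms by simp
  then have "\<bar>1 - 2*t\<bar>^2 \<le> quart a t"
    using gap by simp
  then show "\<bar>1 - 2*t\<bar> \<le> sqrt (quart a t)"
    by (rule real_le_rsqrt)
  assume "0 < t" "t < 1"
  then have "2*(a + 1)*t^2*(1 - t)^2 > 0"
    using assms by simp
  then have "\<bar>1 - 2*t\<bar>^2 < quart a t"
    using gap by simp
  then show "\<bar>1 - 2*t\<bar> < sqrt (quart a t)"
    by (rule real_less_rsqrt)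
qed

lemma arccos_antiderivative:
  assumes a: "a > -1" and t: "0 < t" "t < 1"
  shows "((\<lambda>t. arccos ((1 - 2*t) / sqrt (quart a t)) / sqrt (2*(a + 1))) has_real_derivative
           (t^2 + (1 - t)^2) / quart a t) (at t)"
proof -
  define c where "c = 2*(a + 1)"
  define r where "r = sqrt c"
  define W where "W = quart a t"
  define q where "q = sqrt W"
  define D where "D = quart' a t"
  define s where "s = 1 - t"
  have c: "c > 0" using a by (simp add: c_def)
  have r: "r > 0" "r^2 = c" using c by (simp_all add: r_def)
  have W: "W > 0" using quart_pos[OF a] by (simp add: W_def)
  have q: "q > 0" "q^2 = W" using W by (simp_all add: q_def)
  have s: "s > 0" using t by (simp add: s_def)
  have inside: "-1 < (1 - 2*t) / q" "(1 - 2*t) / q < 1"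
    using arccos_argument_bounds(2)[OF a t] q(1) by (simp_all add: q_def W_def divide_simps abs_less_iff)
  have dq: "((\<lambda>t. sqrt (quart a t)) has_real_derivative inverse q / 2 * D) (at t)"
    unfolding q_def W_def D_def
    by (rule DERIV_chain2[OF DERIV_real_sqrt quart_deriv_t]) (use quart_pos[OF a] in simp)
  have dw: "((\<lambda>t. (1 - 2*t) / sqrt (quart a t)) has_real_derivative
      ((0 - 2*1) * q - (1 - 2*t) * (inverse q / 2 * D)) / (q * q)) (at t)"
    unfolding q_def W_def
    by (rule DERIV_divide[OF DERIV_diff[OF DERIV_const DERIV_cmult[OF DERIV_ident]] dq[unfolded q_def W_def]])
       (simp add: quart_nonzero[OF a])
  have "((\<lambda>t. arccos ((1 - 2*t) / sqrt (quart a t)) / sqrt (2*(a + 1))) has_real_derivative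
      (inverse (- sqrt (1 - ((1 - 2*t) / q)^2)) * (((0 - 2*1) * q - (1 - 2*t) * (inverse q / 2 * D)) / (q * q))) / r)
      (at t)"
    unfolding r_def c_def q_def W_def
    by (rule DERIV_cdivide[OF DERIV_chain2[OF DERIV_arccos dw[unfolded q_def W_def]]]) (use inside in \<open>simp_all add: q_def W_def\<close>)
  moreover have sq: "sqrt (1 - ((1 - 2*t) / q)^2) = r * t * s / q"
  proof (rule real_sqrt_unique)
    have "(r * t * s / q)^2 = c * t^2 * s^2 / W"
      using r q by (simp add: power_divide power_mult_distrib)
    also have "\<dots> = (W - (1 - 2*t)^2) / W"
      unfolding W_def quart_sum_of_squares c_def s_def by simp
    also have "\<dots> = 1 - ((1 - 2*t) / q)^2"
      using W by (simp only: power_divide q(2)) (simp add: diff_divide_distrib)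
    finally show "(r * t * s / q)^2 = 1 - ((1 - 2*t) / q)^2" .
    show "0 \<le> r * t * s / q" using r t s q by simp
  qed
  moreover have "4 * W + (1 - 2*t) * D = 2 * r^2 * t * s * (t^2 + s^2)"
    unfolding r(2) W_def D_def c_def s_def quart_base_identity by simp
  then have "(inverse (- sqrt (1 - ((1 - 2*t) / q)^2))
                * (((0 - 2*1) * q - (1 - 2*t) * (inverse q / 2 * D)) / (q * q))) / r
             = (t^2 + (1 - t)^2) / quart a t"
    unfolding sq W_def[symmetric] s_def[symmetric] using r(1) q t s W
    by (simp add: divide_simps) (simp add: algebra_simps power2_eq_square)
  ultimately show ?thesis by simp
qed

lemma quart_weighted_integral:
  assumes a: "a > -1"
  shows "((\<lambda>t. (t^2 + (1 - t)^2) / quart a t) has_integral pi / sqrt (2*(a + 1))) {0..1}"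
proof -
  define F where "F t = arccos ((1 - 2*t) / sqrt (quart a t)) / sqrt (2*(a + 1))" for t
  have "((\<lambda>t. (t^2 + (1 - t)^2) / quart a t) has_integral (F 1 - F 0)) {0..1}"
  proof (rule fundamental_theorem_of_calculus_interior)
    have "-1 \<le> (1 - 2*t) / sqrt (quart a t) \<and> (1 - 2*t) / sqrt (quart a t) \<le> 1" for t
      using arccos_argument_bounds(1)[OF a, of t] quart_pos[OF a, of t]
      by (simp add: divide_simps abs_le_iff)
    then show "continuous_on {0..1} F"
      unfolding F_def[abs_def] using a
      by (intro continuous_intros) (auto simp: quart_nonzero[OF a])
    fix t :: real assume "t \<in> {0<..<1}"
    then show "(F has_vector_derivative (t^2 + (1 - t)^2) / quart a t) (at t)"
      unfolding F_def[abs_def] using arccos_antiderivative[OF a, of t]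
      by (simp add: has_real_derivative_iff_has_vector_derivative)
  qed simp
  moreover have "quart a 1 = 1" "quart a 0 = 1" by (simp_all add: quart_def)
  ultimately show ?thesis by (simp add: F_def)
qed

(* By the symmetry t -> 1-t, N 0 a is half of the integral computed above. *)
lemma N_0:
  assumes a: "a > -1"
  shows "N 0 a = pi / (2 * sqrt (2*(a + 1)))"
proof -
  define f where "f t = t^2 / quart a t" for t
  have f_int: "(f has_integral integral {0..1} f) {0..1}"
    unfolding f_def[abs_def]
    by (intro integrable_integral integrable_continuous_interval continuous_intros)
       (auto simp: quart_nonzero[OF a])
  have "((\<lambda>x. f ((-1) *\<^sub>R x + 1)) has_integral (1 / (\<bar>-1\<bar> ^ DIM(real))) *\<^sub>R integral {0..1} f)
      ((\<lambda>x. (1 / (-1)) *\<^sub>R x + -((1 / (-1)) *\<^sub>R 1)) ` cbox 0 1)"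
    by (rule has_integral_affinity) (use f_int in auto)
  moreover have "(\<lambda>x. (1 / (-1)) *\<^sub>R x + -((1 / (-1)) *\<^sub>R 1)) ` cbox 0 1 = {0..(1::real)}"
  proof -
    have "(\<lambda>x::real. (1 / (-1)) *\<^sub>R x + -((1 / (-1)) *\<^sub>R 1)) = (\<lambda>x. 1 - x)" by auto
    moreover have "(\<lambda>x::real. 1 - x) ` {0..1} = {0..1}"
      by (auto intro!: image_eqI[where x="1 - _"])
    ultimately show ?thesis by simp
  qed
  moreover have "(\<lambda>x. f ((-1) *\<^sub>R x + 1)) = integrand 0 a"
    by (rule ext) (simp add: f_def integrand_def quart_symmetric power2_eq_square)
  ultimately have "(integrand 0 a has_integral integral {0..1} f) {0..1}"
    by simp
  then have mirror: "N 0 a = integral {0..1} f"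
    using integrand_has_integral[OF a, of 0] by (rule has_integral_unique[symmetric])
  have "((\<lambda>t. integrand 0 a t + f t) has_integral (N 0 a + integral {0..1} f)) {0..1}"
    by (intro has_integral_add integrand_has_integral f_int a)
  moreover have "(\<lambda>t. integrand 0 a t + f t) = (\<lambda>t. (t^2 + (1 - t)^2) / quart a t)"
    unfolding integrand_def f_def by (auto simp: add_divide_distrib power2_eq_square)
  ultimately have "N 0 a + integral {0..1} f = pi / sqrt (2*(a + 1))"
    using quart_weighted_integral[OF a] by (metis has_integral_unique)
  then show ?thesis
    unfolding mirror by simp
qed

lemma N_eq_closed_form: "a > -1 \<Longrightarrow> N m a = closed_form m a"
proof (induction m arbitrary: a)
  case 0
  have "beta_poly 0 ((a + 1)/2) = 1" by (simp add: beta_poly_def beta_def)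
  moreover have "(2*(a + 1)) powr (real 0 + 1/2) = sqrt (2*(a + 1))"
    using "0.prems" by (simp add: powr_half_sqrt)
  ultimately show ?case
    using N_0[OF "0.prems"] by (simp add: closed_form_def)
next
  case (Suc m)
  have "(closed_form m has_real_derivative closed_form' m a) (at a)"
    by (rule closed_form_deriv[OF Suc.prems])
  then have "(N m has_real_derivative closed_form' m a) (at a)"
    by (rule has_field_derivative_transform_within_open[of _ _ _ "{-1<..}"])
       (use Suc in auto)
  then have "4 * real (Suc m) * N (Suc m) a = (4 * real m + 3) * N m a + 2 * a * closed_form' m a"
    by (rule N_recurrence[OF Suc.prems])
  also have "\<dots> = 4 * real (Suc m) * closed_form (Suc m) a"
    using closed_form_recurrence[OF Suc.prems, of m] Suc.IH[OF Suc.prems] by simp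
  finally show ?case by simp
qed

lemma quartic_pos:
  assumes "a > -1"
  shows "(x::real)^4 + 2*a*x^2 + 1 > 0"
proof -
  have sos: "x^4 + 2*a*x^2 + 1 = (x^2 - 1)^2 + 2*(a + 1)*x^2"
    by (simp add: algebra_simps power2_eq_square power4_eq_xxxx)
  show ?thesis
  proof (cases "x = 0")
    case False
    then have "2*(a + 1)*x^2 > 0" using assms by simp
    then show ?thesis unfolding sos by (smt (verit) zero_le_power2)
  qed simp
qed

lemma quartic_substitution:
  assumes "t < 1"
  shows "1 / ((t/(1 - t))^4 + 2*a*(t/(1 - t))^2 + 1)^(m + 1) * (1 / (1 - t)^2) = integrand m a t"
proof -
  define s where "s = 1 - t"
  have s: "s > 0" using assms by (simp add: s_def)
  have "(t/s)^4 + 2*a*(t/s)^2 + 1 = quart a t / s^4"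
    using s unfolding quart_def s_def[symmetric] by (simp add: divide_simps) (simp add: algebra_simps)
  then have "1 / ((t/s)^4 + 2*a*(t/s)^2 + 1)^(m + 1) * (1 / s^2) = s^(4*(m + 1)) / quart a t^(m + 1) / s^2"
    using s by (simp add: power_divide power_mult power_add)
  also have "\<dots> = s^(4*m + 2) / quart a t^(m + 1)"
  proof -
    have "4*(m + 1) = (4*m + 2) + 2" by simp
    then have "s^(4*(m + 1)) = s^(4*m + 2) * s^2"
      by (simp only: power_add)
    then show ?thesis using s by simp
  qed
  finally show ?thesis unfolding integrand_def s_def .
qed

lemma quartic_integral_eq_N:
  assumes a: "a > -1"
  shows "((\<lambda>x::real. 1 / (x^4 + 2*a*x^2 + 1)^(m + 1)) has_integral N m a) {0..}"
proof -
  define f where "f x = 1 / (x^4 + 2*a*x^2 + 1)^(m + 1)" for x :: real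
  define g where "g t = t / (1 - t)" for t :: real
  define g' where "g' t = 1 / (1 - t)^2" for t :: real
  have subst: "f (g t) * g' t = integrand m a t" if "t < 1" for t
    unfolding f_def g_def g'_def using quartic_substitution[OF that] .
  have h_int: "set_integrable lborel {0..1} (integrand m a)"
    by (intro borel_integrable_atLeastAtMost' integrand_continuous a)
  have fg_int: "set_integrable lborel (einterval 0 1) (\<lambda>x. f (g x) * g' x)"
  proof -
    have "set_integrable lborel {0<..<1} (integrand m a)"
      by (rule set_integrable_subset[OF h_int]) auto
    moreover have "set_integrable lborel {0<..<1} (integrand m a)
                 = set_integrable lborel {0<..<1} (\<lambda>x. f (g x) * g' x)"
      by (rule set_integrable_cong) (auto simp: subst)
    ultimately show ?thesis by (simp add: zero_ereal_def one_ereal_def)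
  qed
  have lim0: "((ereal \<circ> g \<circ> real_of_ereal) \<longlongrightarrow> 0) (at_right 0)"
    unfolding zero_ereal_def ereal_tendsto_simps g_def
    by (rule tendsto_eq_intros) (auto intro!: tendsto_eq_intros)
  have lim1: "((ereal \<circ> g \<circ> real_of_ereal) \<longlongrightarrow> \<infinity>) (at_left 1)"
    unfolding one_ereal_def ereal_tendsto_simps g_def by real_asymp
  note substitution = interval_integral_substitution_nonneg[of 0 1 g g' f 0 \<infinity>, OF _ _ _ _ _ _ lim0 lim1 fg_int]
  have f_cont: "isCont f x" for x
    unfolding f_def using quartic_pos[OF a, of x] by (intro continuous_intros) auto
  have f_nonneg: "0 \<le> f x" for x
    unfolding f_def using quartic_pos[OF a, of x] by simp
  have g_deriv: "DERIV g x :> g' x" if "ereal x < 1" for x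
    using that unfolding g_def g'_def
    by (auto intro!: derivative_eq_intros simp: one_ereal_def divide_simps power2_eq_square)
  have g'_cont: "isCont g' x" if "ereal x < 1" for x
    using that unfolding g'_def by (auto intro!: continuous_intros simp: one_ereal_def)
  have hyps: "(0::ereal) < 1"
    "\<And>x. 0 < ereal x \<Longrightarrow> ereal x < 1 \<Longrightarrow> DERIV g x :> g' x"
    "\<And>x. 0 < ereal x \<Longrightarrow> ereal x < 1 \<Longrightarrow> isCont f (g x)"
    "\<And>x. 0 < ereal x \<Longrightarrow> ereal x < 1 \<Longrightarrow> isCont g' x"
    "\<And>x. 0 < ereal x \<Longrightarrow> ereal x < 1 \<Longrightarrow> 0 \<le> f (g x)"
    "\<And>x. 0 \<le> ereal x \<Longrightarrow> ereal x \<le> 1 \<Longrightarrow> 0 \<le> g' x"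
    using g_deriv g'_cont f_cont f_nonneg by (simp_all add: g'_def)
  have f_int: "set_integrable lborel {0<..} f"
    using substitution(1)[OF hyps] by (simp add: zero_ereal_def)
  have "(LINT x:{0<..}|lborel. f x) = (LINT x:{0<..<1}|lborel. f (g x) * g' x)"
    using substitution(2)[OF hyps]
    by (simp add: interval_lebesgue_integral_def zero_ereal_def one_ereal_def)
  also have "\<dots> = (LINT x:{0<..<1}|lborel. integrand m a x)"
    by (rule set_lebesgue_integral_cong) (auto simp: subst)
  also have "\<dots> = integral {0<..<1} (integrand m a)"
    by (rule set_borel_integral_eq_integral(2)) (rule set_integrable_subset[OF h_int], auto)
  also have "\<dots> = N m a"
    unfolding N_def by (simp add: integral_open_interval_real)
  finally have "(f has_integral N m a) {0<..}"
    using set_borel_integral_eq_integral[OF f_int] by (metis integrable_integral)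
  then have "(f has_integral N m a) {0..}"
    by (rule has_integral_spike_set_eq[THEN iffD1, rotated -1])
       (auto intro: negligible_subset[of "{0}"])
  then show ?thesis
    unfolding f_def .
qed

theorem mainTheorem2:
  fixes m :: nat and a :: real
  assumes "a > -1"
  shows "((\<lambda>x::real. 1 / (x^4 + 2*a*x^2 + 1)^(m+1)) has_integral
            (pi/2) * P m a / (2*(a+1)) powr (real m + 1/2)) {0..}
         \<and> P m a = (\<Sum>j=0..m. d j m * a^j)"
proof
  have "N m a = (pi/2) * P m a / (2*(a+1)) powr (real m + 1/2)"
    using N_eq_closed_form[OF assms] by (simp add: closed_form_def P_eq_beta_poly)
  then show "((\<lambda>x::real. 1 / (x^4 + 2*a*x^2 + 1)^(m+1)) has_integral
               (pi/2) * P m a / (2*(a+1)) powr (real m + 1/2)) {0..}"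
    using quartic_integral_eq_N[OF assms, of m] by simp
  show "P m a = (\<Sum>j=0..m. d j m * a^j)"
    by (rule P_polynomial)
qed

end
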